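(* Let $\xi:[a,b]\to\mathbb{R}^3$ be as in the context with $k>0$, $\tau\neq0$ and $\sigma\neq0$ on $[a,b]$, and let $e$ be its evolute. Then $$\int_a^b k_e\,\|e'\|\,dt=\int_a^b|\tau|\,dt,\qquad \int_a^b \tau_e\,\|e'\|\,dt=\int_a^b \operatorname{sgn}(\sigma)\,k\,dt .$$ That is, the total curvature of the evolute equals the total absolute torsion of $\xi$, and the total torsion of the evolute equals the total curvature of $\xi$ taken with the sign of $\sigma$.
   Context: $\xi$ is a smooth arclength-parametrized space curve with curvature $k>0$, $r=1/k$, torsion $\tau$ and Frenet frame $(\mathbf{t},\mathbf{n},\mathbf{b})$. Its evolute is $e=\xi+r\mathbf{n}+\frac{r'}{\tau}\mathbf{b}$, and $\sigma=r\tau+\left(\frac{r'}{\tau}\right)'$. Here $k_e,\tau_e$ denote the curvature and torsion of $e$ at $e(t)$. *)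

theory Defs
  imports "HOL-Analysis.Analysis"
begin

definition vd :: "(real \<Rightarrow> 'a::real_normed_vector) \<Rightarrow> real \<Rightarrow> 'a" where
  "vd f = (\<lambda>t. vector_derivative f (at t))"

definition smooth_on :: "real set \<Rightarrow> (real \<Rightarrow> 'a::real_normed_vector) \<Rightarrow> bool" where
  "smooth_on S f \<longleftrightarrow> (\<forall>m. \<forall>t\<in>S. ((vd ^^ m) f) differentiable (at t))"

text \<open>Frenet apparatus of an arclength-parametrized space curve xi.\<close>
definition fr_t :: "(real \<Rightarrow> real^3) \<Rightarrow> real \<Rightarrow> real^3" where
  "fr_t xi = vd xi"

definition fr_k :: "(real \<Rightarrow> real^3) \<Rightarrow> real \<Rightarrow> real" where
  "fr_k xi t = norm (vd (vd xi) t)"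

definition fr_n :: "(real \<Rightarrow> real^3) \<Rightarrow> real \<Rightarrow> real^3" where
  "fr_n xi t = (1 / fr_k xi t) *\<^sub>R vd (vd xi) t"

definition fr_b :: "(real \<Rightarrow> real^3) \<Rightarrow> real \<Rightarrow> real^3" where
  "fr_b xi t = cross3 (fr_t xi t) (fr_n xi t)"

text \<open>Torsion, with the Frenet convention n' = -k t + tau b (so b' = - tau n).\<close>
definition fr_tau :: "(real \<Rightarrow> real^3) \<Rightarrow> real \<Rightarrow> real" where
  "fr_tau xi t = vd (fr_n xi) t \<bullet> fr_b xi t"

definition fr_r :: "(real \<Rightarrow> real^3) \<Rightarrow> real \<Rightarrow> real" where
  "fr_r xi t = 1 / fr_k xi t"

definition evolute :: "(real \<Rightarrow> real^3) \<Rightarrow> real \<Rightarrow> real^3" where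
  "evolute xi t = xi t + fr_r xi t *\<^sub>R fr_n xi t
      + (deriv (fr_r xi) t / fr_tau xi t) *\<^sub>R fr_b xi t"

definition fr_sigma :: "(real \<Rightarrow> real^3) \<Rightarrow> real \<Rightarrow> real" where
  "fr_sigma xi t = fr_r xi t * fr_tau xi t + deriv (\<lambda>s. deriv (fr_r xi) s / fr_tau xi s) t"

definition curvature :: "(real \<Rightarrow> real^3) \<Rightarrow> real \<Rightarrow> real" where
  "curvature \<gamma> t = norm (cross3 (vd \<gamma> t) (vd (vd \<gamma>) t)) / norm (vd \<gamma> t) ^ 3"

definition torsion :: "(real \<Rightarrow> real^3) \<Rightarrow> real \<Rightarrow> real" where
  "torsion \<gamma> t = (cross3 (vd \<gamma> t) (vd (vd \<gamma>) t) \<bullet> vd (vd (vd \<gamma>)) t)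
      / norm (cross3 (vd \<gamma> t) (vd (vd \<gamma>) t)) ^ 2"

end

theory Submission
  imports Defs
begin

text \<open>Differentiating the evolute with the Frenet equations n' = -k t + \<tau> b and b' = -\<tau> n, the
  coefficients r and r'/\<tau> make the t- and n-components cancel, so e' = \<sigma> b. Two more derivatives
  give e'' = \<sigma>' b - \<sigma>\<tau> n and t \<bullet> e''' = \<sigma>\<tau>k, hence e' \<times> e'' = \<sigma>^2 \<tau> t. Therefore |e'| = |\<sigma>|,
  k_e = |\<tau>|/|\<sigma>| and \<tau>_e = k/\<sigma>, so the integrands agree pointwise on the open interval and the
  endpoints are negligible.\<close>

section \<open>Derivatives of curves\<close>

lemma vd_cong:
  assumes "open U" "t \<in> U" "\<And>s. s \<in> U \<Longrightarrow> f s = g s"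
  shows "vd f t = vd g t"
proof -
  have "\<And>f'. (f has_vector_derivative f') (at t) \<longleftrightarrow> (g has_vector_derivative f') (at t)"
    using assms has_vector_derivative_transform_within_open by metis
  then show ?thesis unfolding vd_def vector_derivative_def by simp
qed

lemma vd_pow_cong:
  assumes "open U" "\<And>s. s \<in> U \<Longrightarrow> f s = g s" "t \<in> U"
  shows "(vd ^^ m) f t = (vd ^^ m) g t"
  using assms(3)
proof (induction m arbitrary: t)
  case 0 then show ?case using assms by simp
next
  case (Suc m)
  then show ?case using vd_cong[OF assms(1) Suc(2), of "(vd ^^ m) f" "(vd ^^ m) g"] by simp
qed

lemma differentiable_at_cong_open:
  fixes f g :: "real \<Rightarrow> 'a::real_normed_vector"
  assumes "open U" "t \<in> U" "\<And>s. s \<in> U \<Longrightarrow> f s = g s" "f differentiable (at t)"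
  shows "g differentiable (at t)"
  using assms vector_derivative_works has_vector_derivative_transform_within_open differentiableI_vector
  by metis

lemma has_vector_derivative_vd: "f differentiable (at t) \<Longrightarrow> (f has_vector_derivative vd f t) (at t)"
  unfolding vd_def using vector_derivative_works by blast

lemma vd_eqI: "(f has_vector_derivative f') (at t) \<Longrightarrow> vd f t = f'"
  using has_vector_derivative_vd differentiableI_vector vector_derivative_unique_at by metis

lemma has_real_derivative_vd:
  "(f::real \<Rightarrow> real) differentiable (at t) \<Longrightarrow> (f has_real_derivative vd f t) (at t)"
  using has_vector_derivative_vd has_real_derivative_iff_has_vector_derivative by blast

lemma real_differentiableI: "(f has_real_derivative D) (at t) \<Longrightarrow> f differentiable (at t)"
  using differentiableI_vector has_real_derivative_iff_has_vector_derivative by blast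

lemma vd_eqI_real: "(f has_real_derivative D) (at t) \<Longrightarrow> vd f t = D"
  using vd_eqI has_real_derivative_iff_has_vector_derivative by blast

lemma deriv_eq_vd: "deriv (f::real \<Rightarrow> real) = vd f"
  by (rule ext) (simp add: deriv_def vd_def vector_derivative_def has_real_derivative_iff_has_vector_derivative)

lemma vd_const: "vd (\<lambda>_. c) = (\<lambda>_. 0)"
  by (rule ext, rule vd_eqI, simp)

lemma vd_pow_Suc_const: "(vd ^^ Suc m) (\<lambda>_. c) = (\<lambda>_. 0)"
  by (induction m) (auto simp: vd_const)

lemma inner_vd_add_eq_0_if_inner_const:
  fixes f g :: "real \<Rightarrow> 'a::real_inner"
  assumes "open U" "t \<in> U" "\<forall>s\<in>U. f s \<bullet> g s = c" "f differentiable (at t)" "g differentiable (at t)"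
  shows "f t \<bullet> vd g t + vd f t \<bullet> g t = 0"
proof -
  have "((\<lambda>s. f s \<bullet> g s) has_vector_derivative (f t \<bullet> vd g t + vd f t \<bullet> g t)) (at t)"
    using assms by (intro bounded_bilinear.has_vector_derivative[OF bounded_bilinear_inner]
        has_vector_derivative_vd)
  moreover have "((\<lambda>s. f s \<bullet> g s) has_vector_derivative 0) (at t)"
    by (rule has_vector_derivative_transform_within_open[OF has_vector_derivative_const assms(1,2)])
       (use assms(3) in auto)
  ultimately show ?thesis by (rule vector_derivative_unique_at)
qed

section \<open>Smooth functions\<close>

definition vd_pow_differentiable_on :: "nat \<Rightarrow> real set \<Rightarrow> (real \<Rightarrow> 'a::real_normed_vector) \<Rightarrow> bool" where
  "vd_pow_differentiable_on m U f \<longleftrightarrow> (\<forall>t\<in>U. ((vd ^^ m) f) differentiable (at t))"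

lemma smooth_on_iff_vd_pow_differentiable_on:
  "smooth_on U f \<longleftrightarrow> (\<forall>m. vd_pow_differentiable_on m U f)"
  unfolding smooth_on_def vd_pow_differentiable_on_def by blast

lemma vd_pow_differentiable_on_Suc:
  "vd_pow_differentiable_on (Suc m) U f = vd_pow_differentiable_on m U (vd f)"
  unfolding vd_pow_differentiable_on_def by (simp add: funpow_Suc_right del: funpow.simps)

lemma vd_pow_differentiable_on_cong:
  assumes "open U" "\<And>s. s \<in> U \<Longrightarrow> f s = g s" "vd_pow_differentiable_on m U f"
  shows "vd_pow_differentiable_on m U g"
  unfolding vd_pow_differentiable_on_def
proof
  fix t assume t: "t \<in> U"
  have "(vd ^^ m) f differentiable at t"
    using assms(3) t by (simp add: vd_pow_differentiable_on_def)
  then show "(vd ^^ m) g differentiable at t"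
    by (rule differentiable_at_cong_open[OF assms(1) t, rotated]) (rule vd_pow_cong[OF assms(1,2)], auto)
qed

lemma vd_pow_differentiable_on_const: "vd_pow_differentiable_on m U (\<lambda>_. c)"
  by (cases m) (auto simp: vd_pow_differentiable_on_def vd_pow_Suc_const simp del: funpow.simps)

lemma vd_pow_add:
  fixes f g :: "real \<Rightarrow> 'a::real_normed_vector"
  assumes "open U" "\<forall>j<m. vd_pow_differentiable_on j U f \<and> vd_pow_differentiable_on j U g" "t \<in> U"
  shows "(vd ^^ m) (\<lambda>s. f s + g s) t = (vd ^^ m) f t + (vd ^^ m) g t"
  using assms(2,3)
proof (induction m arbitrary: t)
  case 0 then show ?case by simp
next
  case (Suc m)
  have IH: "\<And>s. s \<in> U \<Longrightarrow> (vd ^^ m) (\<lambda>s. f s + g s) s = (vd ^^ m) f s + (vd ^^ m) g s"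
    using Suc by auto
  have "(vd ^^ Suc m) (\<lambda>s. f s + g s) t = vd (\<lambda>s. (vd ^^ m) f s + (vd ^^ m) g s) t"
    using vd_cong[OF assms(1) Suc(3) IH] by simp
  also have "\<dots> = vd ((vd ^^ m) f) t + vd ((vd ^^ m) g) t"
    using Suc(2,3) unfolding vd_pow_differentiable_on_def
    by (auto intro!: vd_eqI has_vector_derivative_add has_vector_derivative_vd)
  finally show ?case by simp
qed

lemma vd_pow_differentiable_on_add:
  fixes f g :: "real \<Rightarrow> 'a::real_normed_vector"
  assumes "open U" "\<forall>j\<le>m. vd_pow_differentiable_on j U f \<and> vd_pow_differentiable_on j U g"
  shows "vd_pow_differentiable_on m U (\<lambda>s. f s + g s)"
  unfolding vd_pow_differentiable_on_def
proof
  fix t assume t: "t \<in> U"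
  have lower: "\<forall>j<m. vd_pow_differentiable_on j U f \<and> vd_pow_differentiable_on j U g"
    using assms(2) by auto
  have "(\<lambda>s. (vd ^^ m) f s + (vd ^^ m) g s) differentiable (at t)"
    using assms t unfolding vd_pow_differentiable_on_def by auto
  then show "(vd ^^ m) (\<lambda>s. f s + g s) differentiable (at t)"
    by (rule differentiable_at_cong_open[OF assms(1) t, rotated])
       (simp add: vd_pow_add[OF assms(1) lower])
qed

lemma vd_pow_differentiable_on_bilinear:
  fixes f :: "real \<Rightarrow> 'a::real_normed_vector" and g :: "real \<Rightarrow> 'b::real_normed_vector"
  assumes P: "bounded_bilinear (P :: 'a \<Rightarrow> 'b \<Rightarrow> 'c::real_normed_vector)" and U: "open U"
  shows "\<forall>j\<le>m. vd_pow_differentiable_on j U f \<and> vd_pow_differentiable_on j U g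
    \<Longrightarrow> vd_pow_differentiable_on m U (\<lambda>s. P (f s) (g s))"
proof (induction m arbitrary: f g rule: less_induct)
  case (less m)
  show ?case
  proof (cases m)
    case 0
    then show ?thesis using less(2) unfolding vd_pow_differentiable_on_def
      by (auto intro!: differentiableI_vector[OF bounded_bilinear.has_vector_derivative[OF P
            has_vector_derivative_vd has_vector_derivative_vd]])
  next
    case (Suc n)
    have product_rule: "vd (\<lambda>s. P (f s) (g s)) s = P (f s) (vd g s) + P (vd f s) (g s)" if "s \<in> U" for s
      using less(2)[rule_format, of 0] that unfolding vd_pow_differentiable_on_def
      by (auto intro!: vd_eqI bounded_bilinear.has_vector_derivative[OF P] has_vector_derivative_vd)
    have "vd_pow_differentiable_on n U (\<lambda>s. P (f s) (vd g s) + P (vd f s) (g s))"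
    proof (rule vd_pow_differentiable_on_add[OF U], intro allI impI conjI)
      fix j assume j: "j \<le> n"
      have "\<forall>i\<le>j. vd_pow_differentiable_on i U f \<and> vd_pow_differentiable_on i U (vd g)
          \<and> vd_pow_differentiable_on i U (vd f) \<and> vd_pow_differentiable_on i U g"
        using less(2) j Suc by (auto simp: vd_pow_differentiable_on_Suc[symmetric])
      with j Suc show "vd_pow_differentiable_on j U (\<lambda>s. P (f s) (vd g s))"
        and "vd_pow_differentiable_on j U (\<lambda>s. P (vd f s) (g s))"
        by (auto intro!: less(1))
    qed
    then have "vd_pow_differentiable_on n U (vd (\<lambda>s. P (f s) (g s)))"
      by (rule vd_pow_differentiable_on_cong[OF U, rotated]) (use product_rule in auto)
    then show ?thesis using Suc by (simp add: vd_pow_differentiable_on_Suc)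
  qed
qed

lemma vd_pow_differentiable_on_compose:
  fixes \<phi> f :: "real \<Rightarrow> real"
  assumes U: "open U" and fV: "\<forall>s\<in>U. f s \<in> V"
  shows "\<forall>j\<le>m. vd_pow_differentiable_on j V \<phi> \<Longrightarrow> \<forall>j\<le>m. vd_pow_differentiable_on j U f
    \<Longrightarrow> vd_pow_differentiable_on m U (\<lambda>s. \<phi> (f s))"
proof (induction m arbitrary: \<phi> rule: less_induct)
  case (less m)
  have chain: "((\<lambda>s. \<phi> (f s)) has_real_derivative vd \<phi> (f s) * vd f s) (at s)" if "s \<in> U" for s
    using less(2)[rule_format, of 0] less(3)[rule_format, of 0] fV that
    unfolding vd_pow_differentiable_on_def
    by (auto intro!: DERIV_chain2[OF has_real_derivative_vd has_real_derivative_vd])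
  show ?case
  proof (cases m)
    case 0
    then show ?thesis using chain unfolding vd_pow_differentiable_on_def by (auto intro: real_differentiableI)
  next
    case (Suc n)
    have "vd_pow_differentiable_on n U (\<lambda>s. vd \<phi> (f s) * vd f s)"
    proof (rule vd_pow_differentiable_on_bilinear[OF bounded_bilinear_mult U], intro allI impI conjI)
      fix j assume j: "j \<le> n"
      show "vd_pow_differentiable_on j U (\<lambda>s. vd \<phi> (f s))"
        by (rule less(1)) (use j Suc less(2,3) in \<open>auto simp: vd_pow_differentiable_on_Suc[symmetric]\<close>)
      show "vd_pow_differentiable_on j U (vd f)"
        using j Suc less(3) by (auto simp: vd_pow_differentiable_on_Suc[symmetric])
    qed
    then have "vd_pow_differentiable_on n U (vd (\<lambda>s. \<phi> (f s)))"
      by (rule vd_pow_differentiable_on_cong[OF U, rotated]) (use chain vd_eqI_real in metis)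
    then show ?thesis using Suc by (simp add: vd_pow_differentiable_on_Suc)
  qed
qed

lemma smooth_on_inverse_real: "smooth_on (-{0::real}) inverse"
  unfolding smooth_on_iff_vd_pow_differentiable_on
proof
  fix m show "vd_pow_differentiable_on m (-{0::real}) inverse"
  proof (induction m rule: less_induct)
    case (less m)
    have U: "open (-{0::real})" by auto
    have D: "(inverse has_real_derivative (-1) * (inverse x * inverse x)) (at x)" if "x \<in> -{0}" for x :: real
      using DERIV_inverse[of x UNIV] that by (simp add: power2_eq_square)
    show ?case
    proof (cases m)
      case 0
      then show ?thesis using D unfolding vd_pow_differentiable_on_def by (auto intro: real_differentiableI)
    next
      case (Suc n)
      have "vd_pow_differentiable_on n (-{0}) (\<lambda>x::real. (-1) * (inverse x * inverse x))"
        by (rule vd_pow_differentiable_on_bilinear[OF bounded_bilinear_mult U])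
           (use less Suc in \<open>auto intro!: vd_pow_differentiable_on_const
              vd_pow_differentiable_on_bilinear[OF bounded_bilinear_mult U]\<close>)
      then have "vd_pow_differentiable_on n (-{0}) (vd inverse)"
        by (rule vd_pow_differentiable_on_cong[OF U, rotated]) (use D vd_eqI_real in metis)
      then show ?thesis using Suc by (simp add: vd_pow_differentiable_on_Suc)
    qed
  qed
qed

lemma smooth_on_sqrt: "smooth_on {0::real<..} sqrt"
  unfolding smooth_on_iff_vd_pow_differentiable_on
proof
  fix m show "vd_pow_differentiable_on m {0::real<..} sqrt"
  proof (induction m rule: less_induct)
    case (less m)
    have D: "(sqrt has_real_derivative (1/2) * inverse (sqrt x)) (at x)" if "x \<in> {0<..}" for x :: real
      using DERIV_real_sqrt[of x] that by simp
    show ?case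
    proof (cases m)
      case 0
      then show ?thesis using D unfolding vd_pow_differentiable_on_def by (auto intro: real_differentiableI)
    next
      case (Suc n)
      have "vd_pow_differentiable_on n {0<..} (\<lambda>x::real. (1/2) * inverse (sqrt x))"
      proof (rule vd_pow_differentiable_on_bilinear[OF bounded_bilinear_mult open_greaterThan],
          intro allI impI conjI vd_pow_differentiable_on_const)
        fix j assume "j \<le> n"
        then show "vd_pow_differentiable_on j {0<..} (\<lambda>x. inverse (sqrt x))"
          using Suc less smooth_on_inverse_real
          by (intro vd_pow_differentiable_on_compose[OF open_greaterThan, where V="-{0}"])
             (auto simp: smooth_on_iff_vd_pow_differentiable_on)
      qed
      then have "vd_pow_differentiable_on n {0<..} (vd sqrt)"
        by (rule vd_pow_differentiable_on_cong[OF open_greaterThan, rotated]) (use D vd_eqI_real in metis)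
      then show ?thesis using Suc by (simp add: vd_pow_differentiable_on_Suc)
    qed
  qed
qed

lemma smooth_on_bilinear:
  assumes "bounded_bilinear P" "open U" "smooth_on U f" "smooth_on U g"
  shows "smooth_on U (\<lambda>s. P (f s) (g s))"
  using assms(3,4) unfolding smooth_on_iff_vd_pow_differentiable_on
  by (auto intro!: vd_pow_differentiable_on_bilinear[OF assms(1,2)])

lemma smooth_on_add:
  assumes "open U" "smooth_on U f" "smooth_on U g"
  shows "smooth_on U (\<lambda>s. f s + g s)"
  using assms(2,3) unfolding smooth_on_iff_vd_pow_differentiable_on
  by (auto intro!: vd_pow_differentiable_on_add[OF assms(1)])

lemma smooth_on_vd: "smooth_on U f \<Longrightarrow> smooth_on U (vd f)"
  unfolding smooth_on_iff_vd_pow_differentiable_on by (simp flip: vd_pow_differentiable_on_Suc)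

lemma smooth_on_cong: "open U \<Longrightarrow> smooth_on U f \<Longrightarrow> (\<And>s. s \<in> U \<Longrightarrow> f s = g s) \<Longrightarrow> smooth_on U g"
  unfolding smooth_on_iff_vd_pow_differentiable_on by (metis vd_pow_differentiable_on_cong)

lemma smooth_on_const: "smooth_on U (\<lambda>_. c)"
  unfolding smooth_on_iff_vd_pow_differentiable_on by (simp add: vd_pow_differentiable_on_const)

lemma smooth_on_subset: "smooth_on S f \<Longrightarrow> T \<subseteq> S \<Longrightarrow> smooth_on T f"
  unfolding smooth_on_def by blast

lemma smooth_on_imp_differentiable: "smooth_on U f \<Longrightarrow> t \<in> U \<Longrightarrow> f differentiable (at t)"
  unfolding smooth_on_def by (metis funpow_0)

lemma smooth_on_imp_has_vector_derivative:
  "smooth_on U f \<Longrightarrow> t \<in> U \<Longrightarrow> (f has_vector_derivative vd f t) (at t)"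
  by (rule has_vector_derivative_vd) (rule smooth_on_imp_differentiable)

lemma smooth_on_compose_real:
  fixes \<phi> f :: "real \<Rightarrow> real"
  assumes "open U" "smooth_on V \<phi>" "smooth_on U f" "\<forall>s\<in>U. f s \<in> V"
  shows "smooth_on U (\<lambda>s. \<phi> (f s))"
  using assms(2,3) vd_pow_differentiable_on_compose[OF assms(1,4)]
  unfolding smooth_on_iff_vd_pow_differentiable_on by blast

lemma smooth_on_divide:
  fixes f g :: "real \<Rightarrow> real"
  assumes "open U" "smooth_on U f" "smooth_on U g" "\<forall>s\<in>U. g s \<noteq> 0"
  shows "smooth_on U (\<lambda>s. f s / g s)"
proof -
  have "smooth_on U (\<lambda>s. inverse (g s))"
    by (rule smooth_on_compose_real[OF assms(1) smooth_on_inverse_real assms(3)]) (use assms(4) in auto)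
  then show ?thesis
    using smooth_on_bilinear[OF bounded_bilinear_mult assms(1,2)] by (simp add: divide_inverse)
qed

lemma smooth_on_norm:
  fixes f :: "real \<Rightarrow> 'a::real_inner"
  assumes "open U" "smooth_on U f" "\<forall>s\<in>U. f s \<noteq> 0"
  shows "smooth_on U (\<lambda>s. norm (f s))"
proof -
  have "smooth_on U (\<lambda>s. sqrt (f s \<bullet> f s))"
    by (rule smooth_on_compose_real[OF assms(1) smooth_on_sqrt
          smooth_on_bilinear[OF bounded_bilinear_inner assms(1,2,2)]]) (use assms(3) in auto)
  then show ?thesis by (rule smooth_on_cong[OF assms(1)]) (simp add: norm_eq_sqrt_inner)
qed

section \<open>The Frenet frame of a unit-speed space curve\<close>

lemma bounded_bilinear_cross3: "bounded_bilinear (cross3 :: real^3 \<Rightarrow> real^3 \<Rightarrow> real^3)"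
  using bilinear_conv_bounded_bilinear bilinear_cross by blast

lemma cross3_cross3_left: "cross3 (cross3 x y) z = (x \<bullet> z) *\<^sub>R y - (y \<bullet> z) *\<^sub>R x" for x y z :: "real^3"
  by (simp add: cross3_simps forall_3)

lemma triple_product_expansion:
  "(x \<bullet> cross3 y z) *\<^sub>R v = (v \<bullet> cross3 y z) *\<^sub>R x + (v \<bullet> cross3 z x) *\<^sub>R y + (v \<bullet> cross3 x y) *\<^sub>R z"
  for x y z v :: "real^3"
  by (simp add: cross3_simps forall_3)

locale unit_speed_curve =
  fixes xi :: "real \<Rightarrow> real^3" and U :: "real set"
  assumes open_domain: "open U"
    and smooth: "smooth_on U xi"
    and unit_speed: "s \<in> U \<Longrightarrow> norm (vd xi s) = 1"
    and curvature_pos: "s \<in> U \<Longrightarrow> fr_k xi s > 0"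
begin

lemma smooth_fr_t: "smooth_on U (fr_t xi)"
  unfolding fr_t_def by (rule smooth_on_vd[OF smooth])

lemma smooth_fr_k: "smooth_on U (fr_k xi)"
  unfolding fr_k_def[abs_def] using curvature_pos
  by (intro smooth_on_norm[OF open_domain smooth_on_vd[OF smooth_fr_t[unfolded fr_t_def]]])
     (auto simp: fr_k_def)

lemma smooth_fr_r: "smooth_on U (fr_r xi)"
  unfolding fr_r_def using curvature_pos
  by (intro smooth_on_divide[OF open_domain smooth_on_const smooth_fr_k]) force

lemma smooth_fr_n: "smooth_on U (fr_n xi)"
  using smooth_on_bilinear[OF bounded_bilinear_scaleR open_domain smooth_fr_r smooth_on_vd[OF smooth_fr_t]]
  unfolding fr_n_def[abs_def] fr_r_def fr_t_def .

lemma smooth_fr_b: "smooth_on U (fr_b xi)"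
  using smooth_on_bilinear[OF bounded_bilinear_cross3 open_domain smooth_fr_t smooth_fr_n]
  unfolding fr_b_def[abs_def] .

lemma smooth_fr_tau: "smooth_on U (fr_tau xi)"
  using smooth_on_bilinear[OF bounded_bilinear_inner open_domain smooth_on_vd[OF smooth_fr_n] smooth_fr_b]
  unfolding fr_tau_def[abs_def] .

lemma vd_fr_t: "s \<in> U \<Longrightarrow> vd (fr_t xi) s = fr_k xi s *\<^sub>R fr_n xi s"
  using curvature_pos[of s] by (simp add: fr_n_def fr_t_def)

lemma fr_t_unit: "s \<in> U \<Longrightarrow> fr_t xi s \<bullet> fr_t xi s = 1"
  using unit_speed by (simp add: fr_t_def norm_eq_1)

lemma fr_n_unit: "s \<in> U \<Longrightarrow> fr_n xi s \<bullet> fr_n xi s = 1"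
  using curvature_pos[of s]
  by (simp add: fr_n_def fr_k_def power2_eq_square[symmetric] power2_norm_eq_inner[symmetric])

lemma fr_n_fr_t_orthogonal:
  assumes s: "s \<in> U"
  shows "fr_n xi s \<bullet> fr_t xi s = 0"
proof -
  have "fr_t xi s \<bullet> vd (fr_t xi) s + vd (fr_t xi) s \<bullet> fr_t xi s = 0"
    using fr_t_unit smooth_on_imp_differentiable[OF smooth_fr_t s]
    by (intro inner_vd_add_eq_0_if_inner_const[OF open_domain s, where c=1]) auto
  then show ?thesis
    using curvature_pos[OF s] by (simp add: vd_fr_t[OF s] inner_commute)
qed

lemma fr_b_orthogonal: "fr_b xi s \<bullet> fr_t xi s = 0" "fr_b xi s \<bullet> fr_n xi s = 0"
  by (simp_all add: fr_b_def dot_cross_self inner_commute)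

lemma fr_b_unit:
  assumes s: "s \<in> U"
  shows "fr_b xi s \<bullet> fr_b xi s = 1"
proof -
  have "(norm (fr_b xi s))\<^sup>2 = (norm (fr_t xi s) * norm (fr_n xi s))\<^sup>2"
    using norm_cross_dot[of "fr_t xi s" "fr_n xi s"] fr_n_fr_t_orthogonal[OF s]
    by (simp add: fr_b_def inner_commute)
  also have "\<dots> = 1"
    using fr_t_unit[OF s] fr_n_unit[OF s] by (simp flip: norm_eq_1)
  finally show ?thesis by (simp add: power2_norm_eq_inner)
qed

lemma cross3_fr_n_fr_b: "s \<in> U \<Longrightarrow> cross3 (fr_n xi s) (fr_b xi s) = fr_t xi s"
  using fr_n_unit[of s] fr_n_fr_t_orthogonal[of s] by (simp add: fr_b_def Lagrange inner_commute)

lemma cross3_fr_b_fr_t: "s \<in> U \<Longrightarrow> cross3 (fr_b xi s) (fr_t xi s) = fr_n xi s"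
  using fr_t_unit[of s] fr_n_fr_t_orthogonal[of s] by (simp add: fr_b_def cross3_cross3_left)

lemma cross3_fr_b_fr_n: "s \<in> U \<Longrightarrow> cross3 (fr_b xi s) (fr_n xi s) = - fr_t xi s"
  using fr_n_unit[of s] fr_n_fr_t_orthogonal[of s]
  by (simp add: fr_b_def cross3_cross3_left inner_commute)

lemma cross3_fr_t_fr_b: "s \<in> U \<Longrightarrow> cross3 (fr_t xi s) (fr_b xi s) = - fr_n xi s"
  using fr_t_unit[of s] fr_n_fr_t_orthogonal[of s] by (simp add: fr_b_def Lagrange inner_commute)

lemma frenet_n:
  assumes s: "s \<in> U"
  shows "vd (fr_n xi) s = (- fr_k xi s) *\<^sub>R fr_t xi s + fr_tau xi s *\<^sub>R fr_b xi s"
proof -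
  have n_dn: "fr_n xi s \<bullet> vd (fr_n xi) s = 0"
  proof -
    have "fr_n xi s \<bullet> vd (fr_n xi) s + vd (fr_n xi) s \<bullet> fr_n xi s = 0"
      using fr_n_unit smooth_on_imp_differentiable[OF smooth_fr_n s]
      by (intro inner_vd_add_eq_0_if_inner_const[OF open_domain s, where c=1]) auto
    then show ?thesis by (simp add: inner_commute)
  qed
  have dn_t: "vd (fr_n xi) s \<bullet> fr_t xi s = - fr_k xi s"
  proof -
    have "fr_n xi s \<bullet> vd (fr_t xi) s + vd (fr_n xi) s \<bullet> fr_t xi s = 0"
      using fr_n_fr_t_orthogonal smooth_on_imp_differentiable[OF smooth_fr_n s]
        smooth_on_imp_differentiable[OF smooth_fr_t s]
      by (intro inner_vd_add_eq_0_if_inner_const[OF open_domain s, where c=0]) auto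
    then show ?thesis using fr_n_unit[OF s] by (simp add: vd_fr_t[OF s])
  qed
  \<comment> \<open>expand the derivative in the orthonormal frame (t, n, b)\<close>
  have "(fr_t xi s \<bullet> cross3 (fr_n xi s) (fr_b xi s)) *\<^sub>R vd (fr_n xi) s
      = (vd (fr_n xi) s \<bullet> cross3 (fr_n xi s) (fr_b xi s)) *\<^sub>R fr_t xi s
      + (vd (fr_n xi) s \<bullet> cross3 (fr_b xi s) (fr_t xi s)) *\<^sub>R fr_n xi s
      + (vd (fr_n xi) s \<bullet> cross3 (fr_t xi s) (fr_n xi s)) *\<^sub>R fr_b xi s"
    by (rule triple_product_expansion)
  then show ?thesis
    using cross3_fr_n_fr_b[OF s] cross3_fr_b_fr_t[OF s] fr_t_unit[OF s] n_dn dn_t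
    by (simp add: fr_b_def[symmetric] fr_tau_def inner_commute)
qed

lemma frenet_b:
  assumes s: "s \<in> U"
  shows "vd (fr_b xi) s = (- fr_tau xi s) *\<^sub>R fr_n xi s"
proof -
  have "(fr_b xi has_vector_derivative
      cross3 (fr_t xi s) (vd (fr_n xi) s) + cross3 (vd (fr_t xi) s) (fr_n xi s)) (at s)"
    unfolding fr_b_def
    by (intro bounded_bilinear.has_vector_derivative[OF bounded_bilinear_cross3]
        smooth_on_imp_has_vector_derivative[OF smooth_fr_t s]
        smooth_on_imp_has_vector_derivative[OF smooth_fr_n s])
  then show ?thesis
    using cross3_fr_t_fr_b[OF s]
    by (simp add: vd_eqI frenet_n[OF s] vd_fr_t[OF s] Cross3.right_diff_distrib cross_mult_right cross_mult_left)
qed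

end

section \<open>The evolute\<close>

locale evolute_curve = unit_speed_curve +
  assumes torsion_nonzero: "s \<in> U \<Longrightarrow> fr_tau xi s \<noteq> 0"
begin

definition evolute_b_coeff :: "real \<Rightarrow> real" where
  "evolute_b_coeff s = vd (fr_r xi) s / fr_tau xi s"

lemma evolute_eq: "evolute xi = (\<lambda>s. xi s + fr_r xi s *\<^sub>R fr_n xi s + evolute_b_coeff s *\<^sub>R fr_b xi s)"
  by (simp add: fun_eq_iff evolute_def evolute_b_coeff_def deriv_eq_vd)

lemma fr_sigma_eq: "fr_sigma xi s = fr_r xi s * fr_tau xi s + vd evolute_b_coeff s"
  by (simp add: fr_sigma_def evolute_b_coeff_def[abs_def] deriv_eq_vd)

lemma smooth_evolute_b_coeff: "smooth_on U evolute_b_coeff"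
  unfolding evolute_b_coeff_def[abs_def] using torsion_nonzero
  by (intro smooth_on_divide[OF open_domain smooth_on_vd[OF smooth_fr_r] smooth_fr_tau]) auto

lemma smooth_fr_sigma: "smooth_on U (fr_sigma xi)"
  unfolding fr_sigma_eq[abs_def]
  by (intro smooth_on_add[OF open_domain] smooth_on_vd[OF smooth_evolute_b_coeff]
      smooth_on_bilinear[OF bounded_bilinear_mult open_domain smooth_fr_r smooth_fr_tau])

lemma vd_evolute:
  assumes s: "s \<in> U"
  shows "vd (evolute xi) s = fr_sigma xi s *\<^sub>R fr_b xi s"
proof -
  have "(evolute xi has_vector_derivative
      fr_t xi s + (fr_r xi s *\<^sub>R vd (fr_n xi) s + vd (fr_r xi) s *\<^sub>R fr_n xi s)
        + (evolute_b_coeff s *\<^sub>R vd (fr_b xi) s + vd evolute_b_coeff s *\<^sub>R fr_b xi s)) (at s)"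
    unfolding evolute_eq fr_t_def
    by (intro has_vector_derivative_add
        smooth_on_imp_has_vector_derivative[OF smooth s]
        bounded_bilinear.has_vector_derivative[OF bounded_bilinear_scaleR]
        smooth_on_imp_has_vector_derivative[OF smooth_fr_r s]
        smooth_on_imp_has_vector_derivative[OF smooth_fr_n s]
        smooth_on_imp_has_vector_derivative[OF smooth_evolute_b_coeff s]
        smooth_on_imp_has_vector_derivative[OF smooth_fr_b s])
  then have "vd (evolute xi) s = (1 - fr_r xi s * fr_k xi s) *\<^sub>R fr_t xi s
      + (vd (fr_r xi) s - evolute_b_coeff s * fr_tau xi s) *\<^sub>R fr_n xi s
      + (fr_r xi s * fr_tau xi s + vd evolute_b_coeff s) *\<^sub>R fr_b xi s"
    by (simp add: vd_eqI frenet_n[OF s] frenet_b[OF s] algebra_simps)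
  also have "\<dots> = fr_sigma xi s *\<^sub>R fr_b xi s"
    using curvature_pos[OF s] torsion_nonzero[OF s]
    by (simp add: fr_r_def evolute_b_coeff_def fr_sigma_eq)
  finally show ?thesis .
qed

lemma vd2_evolute:
  assumes s: "s \<in> U"
  shows "vd (vd (evolute xi)) s = vd (fr_sigma xi) s *\<^sub>R fr_b xi s - (fr_sigma xi s * fr_tau xi s) *\<^sub>R fr_n xi s"
proof -
  have "vd (vd (evolute xi)) s = vd (\<lambda>s. fr_sigma xi s *\<^sub>R fr_b xi s) s"
    using vd_evolute by (rule vd_cong[OF open_domain s])
  also have "\<dots> = fr_sigma xi s *\<^sub>R vd (fr_b xi) s + vd (fr_sigma xi) s *\<^sub>R fr_b xi s"
    by (intro vd_eqI bounded_bilinear.has_vector_derivative[OF bounded_bilinear_scaleR]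
        smooth_on_imp_has_vector_derivative[OF smooth_fr_sigma s]
        smooth_on_imp_has_vector_derivative[OF smooth_fr_b s])
  finally show ?thesis by (simp add: frenet_b[OF s] algebra_simps)
qed

lemma fr_t_inner_vd3_evolute:
  assumes s: "s \<in> U"
  shows "fr_t xi s \<bullet> vd (vd (vd (evolute xi))) s = fr_sigma xi s * fr_tau xi s * fr_k xi s"
proof -
  let ?E2 = "\<lambda>s. vd (fr_sigma xi) s *\<^sub>R fr_b xi s - (fr_sigma xi s * fr_tau xi s) *\<^sub>R fr_n xi s"
  have sigma_tau: "((\<lambda>s. fr_sigma xi s * fr_tau xi s) has_vector_derivative
      fr_sigma xi s * vd (fr_tau xi) s + vd (fr_sigma xi) s * fr_tau xi s) (at s)"
    by (intro bounded_bilinear.has_vector_derivative[OF bounded_bilinear_mult]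
        smooth_on_imp_has_vector_derivative[OF smooth_fr_sigma s]
        smooth_on_imp_has_vector_derivative[OF smooth_fr_tau s])
  have "vd (vd (vd (evolute xi))) s = vd ?E2 s"
    using vd2_evolute by (rule vd_cong[OF open_domain s])
  also have "\<dots> = (vd (fr_sigma xi) s *\<^sub>R vd (fr_b xi) s + vd (vd (fr_sigma xi)) s *\<^sub>R fr_b xi s)
      - ((fr_sigma xi s * fr_tau xi s) *\<^sub>R vd (fr_n xi) s
         + (fr_sigma xi s * vd (fr_tau xi) s + vd (fr_sigma xi) s * fr_tau xi s) *\<^sub>R fr_n xi s)"
    by (intro vd_eqI has_vector_derivative_diff
        bounded_bilinear.has_vector_derivative[OF bounded_bilinear_scaleR] sigma_tau
        smooth_on_imp_has_vector_derivative[OF smooth_on_vd[OF smooth_fr_sigma] s]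
        smooth_on_imp_has_vector_derivative[OF smooth_fr_b s]
        smooth_on_imp_has_vector_derivative[OF smooth_fr_n s])
  finally show ?thesis
    using fr_t_unit[OF s] fr_n_fr_t_orthogonal[OF s] fr_b_orthogonal[of s]
    by (simp add: frenet_b[OF s] frenet_n[OF s] inner_diff_right inner_add_right inner_commute)
qed

lemma cross3_vd_vd2_evolute:
  assumes s: "s \<in> U"
  shows "cross3 (vd (evolute xi) s) (vd (vd (evolute xi)) s) = ((fr_sigma xi s)\<^sup>2 * fr_tau xi s) *\<^sub>R fr_t xi s"
  using cross3_fr_b_fr_n[OF s]
  by (simp add: vd_evolute[OF s] vd2_evolute[OF s] Cross3.right_diff_distrib cross_mult_left
      cross_mult_right power2_eq_square)

lemma norm_vd_evolute: "s \<in> U \<Longrightarrow> norm (vd (evolute xi) s) = \<bar>fr_sigma xi s\<bar>"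
  using fr_b_unit[of s] by (simp add: vd_evolute norm_eq_sqrt_inner)

lemma norm_cross3_vd_vd2_evolute:
  "s \<in> U \<Longrightarrow> norm (cross3 (vd (evolute xi) s) (vd (vd (evolute xi)) s)) = (fr_sigma xi s)\<^sup>2 * \<bar>fr_tau xi s\<bar>"
  using fr_t_unit[of s] by (simp add: cross3_vd_vd2_evolute norm_eq_sqrt_inner abs_mult)

lemma curvature_evolute_mult_speed:
  assumes s: "s \<in> U" and "fr_sigma xi s \<noteq> 0"
  shows "curvature (evolute xi) s * norm (vd (evolute xi) s) = \<bar>fr_tau xi s\<bar>"
  using assms(2)
  by (simp add: curvature_def norm_cross3_vd_vd2_evolute[OF s] norm_vd_evolute[OF s]
      power2_eq_square power3_eq_cube abs_mult)

lemma torsion_evolute_mult_speed: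
  assumes s: "s \<in> U" and "fr_sigma xi s \<noteq> 0"
  shows "torsion (evolute xi) s * norm (vd (evolute xi) s) = sgn (fr_sigma xi s) * fr_k xi s"
proof -
  have "torsion (evolute xi) s = fr_k xi s / fr_sigma xi s"
    unfolding torsion_def norm_cross3_vd_vd2_evolute[OF s]
    using assms(2) torsion_nonzero[OF s]
    by (simp add: cross3_vd_vd2_evolute[OF s] fr_t_inner_vd3_evolute[OF s] power_mult_distrib
        power2_eq_square field_simps)
  then show ?thesis
    using assms(2) by (simp add: norm_vd_evolute[OF s] abs_sgn sgn_if)
qed

end

theorem mainTheorem6:
  fixes xi :: "real \<Rightarrow> real^3" and S :: "real set" and a b :: real
  assumes "open S" and "{a..b} \<subseteq> S"
    and "smooth_on S xi"
    and "\<forall>t\<in>{a..b}. norm (vd xi t) = 1"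
    and "\<forall>t\<in>{a..b}. fr_k xi t > 0"
    and "\<forall>t\<in>{a..b}. fr_tau xi t \<noteq> 0"
    and "\<forall>t\<in>{a..b}. fr_sigma xi t \<noteq> 0"
  shows "integral {a..b} (\<lambda>t. curvature (evolute xi) t * norm (vd (evolute xi) t))
           = integral {a..b} (\<lambda>t. \<bar>fr_tau xi t\<bar>)
       \<and> integral {a..b} (\<lambda>t. torsion (evolute xi) t * norm (vd (evolute xi) t))
           = integral {a..b} (\<lambda>t. sgn (fr_sigma xi t) * fr_k xi t)"
proof -
  interpret evolute_curve xi "{a<..<b}"
  proof
    show "smooth_on {a<..<b} xi"
      using assms(2) by (intro smooth_on_subset[OF assms(3)]) auto
  qed (use assms(4-6) in auto)
  have endpoints: "negligible {a, b}" by simp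
  have curvature: "\<bar>fr_tau xi t\<bar> = curvature (evolute xi) t * norm (vd (evolute xi) t)"
    and torsion: "sgn (fr_sigma xi t) * fr_k xi t = torsion (evolute xi) t * norm (vd (evolute xi) t)"
    if "t \<in> {a..b} - {a, b}" for t
    using that assms(7) curvature_evolute_mult_speed torsion_evolute_mult_speed by auto
  show ?thesis
    by (intro conjI integral_spike[OF endpoints]) (use curvature torsion in auto)
qed

end
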